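(* Let $n\ge 2$, $c=(c_1,\dots,c_n)^T$ with $c_k>0$ for all $k$, and fix $i\in\{1,\dots,n\}$. Let $\mathcal{E_D}=\{x\in\mathbb{R}^n:\sum_{k=1}^n (x_k-c_k)^2/c_k^2\le 1\}$ be the Dikin ellipsoid and $\mathcal{H}_i=\{x\in\mathbb{R}^n: x_i=c_i\}$. Define the symmetric matrix $$Q_i=D+\frac{n-3}{c_i^2}E_{ii}+\sum_{j=1,j\neq i}^n\frac{-1}{c_ic_j}(E_{ij}+E_{ji}),\qquad D=\mathrm{diag}\{c_1^{-2},\dots,c_n^{-2}\},$$ i.e. $(Q_i)_{ii}=\frac{n-2}{c_i^2}$, $(Q_i)_{jj}=\frac{1}{c_j^2}$ and $(Q_i)_{ij}=(Q_i)_{ji}=-\frac{1}{c_ic_j}$ for $j\neq i$, all other entries $0$. Then the Lorenz cone with vertex at the origin and base $\mathcal{H}_i\cap\mathcal{E_D}$, together with its reflection through the origin, is represented by $Q_i$: $$\{x\in\mathbb{R}^n: x^TQ_ix\le 0\}=\{\lambda y:\ \lambda\in\mathbb{R},\ y\in\mathcal{H}_i\cap\mathcal{E_D}\}.$$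
   Context: $E_{ij}$ denotes the $n\times n$ matrix whose $(i,j)$ entry is $1$ and all other entries are $0$. *)

theory Defs
  imports "HOL-Analysis.Analysis"
begin

definition Emat :: "'n::finite \<Rightarrow> 'n \<Rightarrow> real^'n^'n" where
  "Emat i j = (\<chi> a b. if a = i \<and> b = j then 1 else 0)"

definition Dmat :: "real^'n::finite \<Rightarrow> real^'n^'n" where
  "Dmat c = (\<chi> a b. if a = b then 1 / (c $ a)^2 else 0)"

definition dikin :: "real^'n::finite \<Rightarrow> (real^'n) set" where
  "dikin c = {x. (\<Sum>k\<in>UNIV. (x $ k - c $ k)^2 / (c $ k)^2) \<le> 1}"

definition hyperH :: "real^'n::finite \<Rightarrow> 'n \<Rightarrow> (real^'n) set" where
  "hyperH c i = {x. x $ i = c $ i}"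

definition Qmat :: "real^'n::finite \<Rightarrow> 'n \<Rightarrow> real^'n^'n" where
  "Qmat c i = Dmat c + ((real CARD('n) - 3) / (c $ i)^2) *\<^sub>R Emat i i
      + (\<Sum>j\<in>UNIV - {i}. (- 1 / (c $ i * c $ j)) *\<^sub>R (Emat i j + Emat j i))"

end

theory Submission
  imports Defs
begin

text \<open>
  In the coordinates u = x/c (componentwise) the quadratic form of Q_i is the sum of
  (u_j - u_i)^2 over j \<noteq> i minus u_i^2.  On the hyperplane u_i = 1 the condition
  x^T Q_i x \<le> 0 is therefore exactly the Dikin inequality, and on u_i = 0 it forces x = 0.
  Since a quadratic form is homogeneous of degree 2, its sublevel set {q \<le> 0} is then the
  union of the lines through the origin and the points of its section by u_i = 1.
\<close>

lemma quadratic_form_add: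
  fixes x :: "real^'n::finite"
  shows "x \<bullet> ((A + B) *v x) = x \<bullet> (A *v x) + x \<bullet> (B *v x)"
  by (simp add: matrix_vector_mult_add_rdistrib inner_add_right)

lemma quadratic_form_scaleR_matrix:
  fixes x :: "real^'n::finite"
  shows "x \<bullet> ((r *\<^sub>R A) *v x) = r * (x \<bullet> (A *v x))"
  by (simp add: scaleR_matrix_vector_assoc[symmetric])

lemma quadratic_form_sum:
  fixes x :: "real^'n::finite"
  assumes "finite S"
  shows "x \<bullet> ((\<Sum>j\<in>S. A j) *v x) = (\<Sum>j\<in>S. x \<bullet> (A j *v x))"
  using assms by (induction S rule: finite_induct) (auto simp: quadratic_form_add)

lemma quadratic_form_scaleR_vector:
  fixes x :: "real^'n::finite"
  shows "(l *\<^sub>R x) \<bullet> (A *v (l *\<^sub>R x)) = l\<^sup>2 * (x \<bullet> (A *v x))"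
  by (simp add: matrix_vector_mult_scaleR power2_eq_square)

lemma quadratic_cone_eq_scaled_section:
  fixes A :: "real^'n::finite^'n" and c :: "real^'n"
  assumes "c $ i \<noteq> 0" and "c \<bullet> (A *v c) \<le> 0"
    and "\<And>x. x $ i = 0 \<Longrightarrow> x \<bullet> (A *v x) \<le> 0 \<Longrightarrow> x = 0"
  shows "{x. x \<bullet> (A *v x) \<le> 0} = {l *\<^sub>R y | l y. y $ i = c $ i \<and> y \<bullet> (A *v y) \<le> 0}"
proof (intro set_eqI iffI)
  fix x :: "real^'n"
  assume "x \<in> {x. x \<bullet> (A *v x) \<le> 0}"
  then have x: "x \<bullet> (A *v x) \<le> 0"
    by simp
  show "x \<in> {l *\<^sub>R y | l y. y $ i = c $ i \<and> y \<bullet> (A *v y) \<le> 0}"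
  proof (cases "x $ i = 0")
    case True
    then have "x = 0 *\<^sub>R c"
      using assms(3) x by simp
    then show ?thesis
      using assms(2) by blast
  next
    case False
    define l where "l = x $ i / c $ i"
    have "l \<noteq> 0"
      using False assms(1) by (simp add: l_def)
    define y where "y = inverse l *\<^sub>R x"
    have "y $ i = c $ i"
      using \<open>l \<noteq> 0\<close> assms(1) by (simp add: y_def l_def)
    moreover have "y \<bullet> (A *v y) \<le> 0"
      using x quadratic_form_scaleR_vector [of "inverse l" x A]
      by (simp add: y_def mult_nonneg_nonpos)
    moreover have "x = l *\<^sub>R y"
      using \<open>l \<noteq> 0\<close> by (simp add: y_def)
    ultimately show ?thesis
      by blast
  qed
next
  fix x :: "real^'n"
  assume "x \<in> {l *\<^sub>R y | l y. y $ i = c $ i \<and> y \<bullet> (A *v y) \<le> 0}"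
  then obtain l y where x: "x = l *\<^sub>R y" and y: "y \<bullet> (A *v y) \<le> 0"
    by blast
  have "x \<bullet> (A *v x) = l\<^sup>2 * (y \<bullet> (A *v y))"
    unfolding x by (rule quadratic_form_scaleR_vector)
  then show "x \<in> {x. x \<bullet> (A *v x) \<le> 0}"
    using y by (simp add: mult_nonneg_nonpos)
qed

lemma quadratic_form_Emat:
  fixes x :: "real^'n::finite"
  shows "x \<bullet> (Emat a b *v x) = x $ a * x $ b"
proof -
  have "(Emat a b *v x) $ k = (if k = a then x $ b else 0)" for k
    by (simp add: Emat_def matrix_vector_mult_def if_distrib [of "\<lambda>a. a * _"] cong: if_cong)
  then show ?thesis
    by (simp add: inner_vec_def if_distrib [of "\<lambda>a. _ * a"] cong: if_cong)
qed

lemma quadratic_form_Dmat: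
  fixes x :: "real^'n::finite"
  shows "x \<bullet> (Dmat c *v x) = (\<Sum>k\<in>UNIV. (x $ k / c $ k)\<^sup>2)"
proof -
  have "(Dmat c *v x) $ k = x $ k / (c $ k)\<^sup>2" for k
    by (simp add: Dmat_def matrix_vector_mult_def if_distrib [of "\<lambda>a. a * _"] cong: if_cong)
  then show ?thesis
    by (simp add: inner_vec_def power_divide power2_eq_square)
qed

lemma quadratic_form_Qmat:
  fixes c x :: "real^'n::finite"
  shows "x \<bullet> (Qmat c i *v x)
           = (\<Sum>j\<in>UNIV - {i}. (x $ j / c $ j - x $ i / c $ i)\<^sup>2) - (x $ i / c $ i)\<^sup>2"
proof -
  define u where "u k = x $ k / c $ k" for k
  have "x \<bullet> (Qmat c i *v x) = (\<Sum>k\<in>UNIV. (u k)\<^sup>2) + (real CARD('n) - 3) * (u i)\<^sup>2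
          + (\<Sum>j\<in>UNIV - {i}. - 2 * (u i * u j))"
    unfolding Qmat_def quadratic_form_add quadratic_form_scaleR_matrix quadratic_form_Dmat
      quadratic_form_sum[OF finite] quadratic_form_Emat
    by (simp add: u_def power2_eq_square field_simps)
  also have "\<dots> = (\<Sum>j\<in>UNIV - {i}. (u j)\<^sup>2 - 2 * (u i * u j) + (u i)\<^sup>2) - (u i)\<^sup>2"
  proof -
    have "(\<Sum>k\<in>UNIV. (u k)\<^sup>2) = (u i)\<^sup>2 + (\<Sum>j\<in>UNIV - {i}. (u j)\<^sup>2)"
      by (simp add: sum.remove)
    moreover have "(\<Sum>j\<in>UNIV - {i}. (u i)\<^sup>2) = (real CARD('n) - 1) * (u i)\<^sup>2"
      by (simp add: card_Diff_singleton of_nat_diff)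
    ultimately show ?thesis
      by (simp add: sum.distrib sum_subtractf sum_negf algebra_simps)
  qed
  also have "\<dots> = (\<Sum>j\<in>UNIV - {i}. (u j - u i)\<^sup>2) - (u i)\<^sup>2"
    by (simp add: power2_diff algebra_simps)
  finally show ?thesis
    by (simp add: u_def)
qed

lemma quadratic_form_Qmat_nonpos_imp_zero:
  fixes c x :: "real^'n::finite"
  assumes "\<And>k. c $ k \<noteq> 0" and "x $ i = 0" and "x \<bullet> (Qmat c i *v x) \<le> 0"
  shows "x = 0"
proof -
  have "(\<Sum>j\<in>UNIV - {i}. (x $ j / c $ j)\<^sup>2) \<le> 0"
    using assms(2,3) by (simp add: quadratic_form_Qmat)
  moreover have "(\<Sum>j\<in>UNIV - {i}. (x $ j / c $ j)\<^sup>2) \<ge> 0"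
    by (simp add: sum_nonneg)
  ultimately have "\<forall>j\<in>UNIV - {i}. (x $ j / c $ j)\<^sup>2 = 0"
    by (simp add: sum_nonneg_eq_0_iff)
  then show ?thesis
    using assms(1,2) by (auto simp: vec_eq_iff)
qed

lemma hyperH_inter_dikin_eq:
  fixes c :: "real^'n::finite"
  assumes "\<And>k. c $ k \<noteq> 0"
  shows "hyperH c i \<inter> dikin c = {y. y $ i = c $ i \<and> y \<bullet> (Qmat c i *v y) \<le> 0}"
proof -
  have "(\<Sum>k\<in>UNIV. (y $ k - c $ k)\<^sup>2 / (c $ k)\<^sup>2)
          = (\<Sum>j\<in>UNIV - {i}. (y $ j / c $ j - y $ i / c $ i)\<^sup>2)"
    if "y $ i = c $ i" for y :: "real^'n"
  proof -
    have "(\<Sum>k\<in>UNIV. (y $ k - c $ k)\<^sup>2 / (c $ k)\<^sup>2)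
            = (\<Sum>j\<in>UNIV - {i}. (y $ j - c $ j)\<^sup>2 / (c $ j)\<^sup>2)"
      using that by (simp add: sum.remove [OF finite UNIV_I [of i]])
    also have "\<dots> = (\<Sum>j\<in>UNIV - {i}. (y $ j / c $ j - y $ i / c $ i)\<^sup>2)"
      using that assms by (intro sum.cong) (auto simp: power2_eq_square field_simps)
    finally show ?thesis .
  qed
  then show ?thesis
    using assms by (auto simp: hyperH_def dikin_def quadratic_form_Qmat)
qed

theorem mainTheorem3:
  fixes c :: "real^'n::finite" and i :: 'n
  assumes "CARD('n) \<ge> 2"
    and "\<And>k. c $ k > 0"
  shows "{x :: real^'n. x \<bullet> (Qmat c i *v x) \<le> 0}
         = {l *\<^sub>R y | l y. y \<in> hyperH c i \<inter> dikin c}"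
proof -
  have c_nonzero: "c $ k \<noteq> 0" for k
    using assms(2) [of k] by simp
  have "c \<in> hyperH c i \<inter> dikin c"
    by (simp add: hyperH_def dikin_def)
  then have "c \<bullet> (Qmat c i *v c) \<le> 0"
    by (simp add: hyperH_inter_dikin_eq c_nonzero)
  then show ?thesis
    unfolding hyperH_inter_dikin_eq [OF c_nonzero] mem_Collect_eq
    using quadratic_form_Qmat_nonpos_imp_zero [OF c_nonzero]
    by (intro quadratic_cone_eq_scaled_section c_nonzero)
qed

end
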